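(* Let $1\leq k\leq n$. (1) Let $X$ be an $(n,k)$ right Gog trapezoid. Among all Gog triangles of size $n$ whose entries with $i-j\leq k-1$ coincide with $X$, there is an entrywise smallest one, and it satisfies $X_{i,j}=j$ for $i\geq j+k$. (2) Let $X$ be an $(n,k)$ left Gog trapezoid. Among all Gog triangles of size $n$ whose entries with $j\leq k$ coincide with $X$, there is an entrywise smallest one, and it satisfies, for $j\geq k$, $$X_{i,j}=\max\big(X_{i,k}+j-k,\ X_{i-1,k}+j-k-1,\ \dots,\ X_{i-j+k,k}\big).$$
   Context: A Gelfand–Tsetlin triangle of size $n$ is an array $X=(X_{i,j})_{n\geq i\geq j\geq 1}$ of positive integers (row $n$ is the top row, row $1$ the bottom) with $X_{i+1,j}\leq X_{i,j}\leq X_{i+1,j+1}$ for all $n-1\geq i\geq j\geq 1$. A Gog triangle of size $n$ is a Gelfand–Tsetlin triangle with strictly increasing rows and top row $X_{n,j}=j$, $1\leq j\leq n$. Triangles are ordered entrywise. An $(n,k)$ right Gog trapezoid is the array $(X_{i,j})_{n\geq i\geq j\geq 1,\ i-j\leq k-1}$ of entries of some Gog triangle of size $n$ lying in its $k$ rightmost SW–NE diagonals; an $(n,k)$ left Gog trapezoid is the array $(X_{i,j})_{n\geq i\geq j\geq 1,\ j\leq k}$ of entries of some Gog triangle of size $n$ lying in its $k$ leftmost NW–SE diagonals. *)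

theory Defs
  imports Main
begin

text \<open>Triangular arrays are functions nat => nat => int; only the entries
 X i j with 1 <= j <= i <= n are meaningful (row n is the top row).\<close>

definition tri_idx :: "nat \<Rightarrow> nat \<Rightarrow> nat \<Rightarrow> bool" where
  "tri_idx n i j \<longleftrightarrow> 1 \<le> j \<and> j \<le> i \<and> i \<le> n"

definition is_GT :: "nat \<Rightarrow> (nat \<Rightarrow> nat \<Rightarrow> int) \<Rightarrow> bool" where
  "is_GT n X \<longleftrightarrow>
     (\<forall>i j. tri_idx n i j \<longrightarrow> X i j \<ge> 1) \<and>
     (\<forall>i j. 1 \<le> j \<and> j \<le> i \<and> i + 1 \<le> n \<longrightarrow>
        X (i+1) j \<le> X i j \<and> X i j \<le> X (i+1) (j+1))"

definition is_Gog :: "nat \<Rightarrow> (nat \<Rightarrow> nat \<Rightarrow> int) \<Rightarrow> bool" where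
  "is_Gog n X \<longleftrightarrow> is_GT n X \<and>
     (\<forall>i j. 1 \<le> j \<and> j < i \<and> i \<le> n \<longrightarrow> X i j < X i (j+1)) \<and>
     (\<forall>j. 1 \<le> j \<and> j \<le> n \<longrightarrow> X n j = int j)"

text \<open>Index set of the k rightmost SW-NE diagonals (i - j <= k - 1)
 and of the k leftmost NW-SE diagonals (j <= k).\<close>

definition right_idx :: "nat \<Rightarrow> nat \<Rightarrow> nat \<Rightarrow> nat \<Rightarrow> bool" where
  "right_idx n k i j \<longleftrightarrow> tri_idx n i j \<and> i - j \<le> k - 1"

definition left_idx :: "nat \<Rightarrow> nat \<Rightarrow> nat \<Rightarrow> nat \<Rightarrow> bool" where
  "left_idx n k i j \<longleftrightarrow> tri_idx n i j \<and> j \<le> k"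

definition agree_on :: "(nat \<Rightarrow> nat \<Rightarrow> bool) \<Rightarrow> (nat \<Rightarrow> nat \<Rightarrow> int) \<Rightarrow> (nat \<Rightarrow> nat \<Rightarrow> int) \<Rightarrow> bool" where
  "agree_on D X Y \<longleftrightarrow> (\<forall>i j. D i j \<longrightarrow> X i j = Y i j)"

definition is_right_Gog_trap :: "nat \<Rightarrow> nat \<Rightarrow> (nat \<Rightarrow> nat \<Rightarrow> int) \<Rightarrow> bool" where
  "is_right_Gog_trap n k X \<longleftrightarrow> (\<exists>G. is_Gog n G \<and> agree_on (right_idx n k) G X)"

definition is_left_Gog_trap :: "nat \<Rightarrow> nat \<Rightarrow> (nat \<Rightarrow> nat \<Rightarrow> int) \<Rightarrow> bool" where
  "is_left_Gog_trap n k X \<longleftrightarrow> (\<exists>G. is_Gog n G \<and> agree_on (left_idx n k) G X)"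

definition tri_le :: "nat \<Rightarrow> (nat \<Rightarrow> nat \<Rightarrow> int) \<Rightarrow> (nat \<Rightarrow> nat \<Rightarrow> int) \<Rightarrow> bool" where
  "tri_le n X Y \<longleftrightarrow> (\<forall>i j. tri_idx n i j \<longrightarrow> X i j \<le> Y i j)"

end

theory Submission
  imports Defs
begin

text \<open>Rows of a Gog triangle increase by at least one per step and its NE diagonals weakly
  increase, so every entry satisfies X i j \<ge> j and, following a diagonal down and then a row to
  the left, X i j \<ge> X (i-l) k + (j-k-l) for l \<le> j-k. Filling the free entries with the
  largest of these lower bounds that only involve the prescribed entries yields again a Gog
  triangle, which is therefore the least completion: the column index j for the right
  trapezoid, the maximum over l for the left one.\<close>

lemma agree_on_trans: "agree_on D X Y \<Longrightarrow> agree_on D Y Z \<Longrightarrow> agree_on D X Z"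
  unfolding agree_on_def by simp

lemma agree_on_sym: "agree_on D X Y \<Longrightarrow> agree_on D Y X"
  unfolding agree_on_def by simp

lemma Gog_ge_one: "is_Gog n G \<Longrightarrow> 1 \<le> j \<Longrightarrow> j \<le> i \<Longrightarrow> i \<le> n \<Longrightarrow> 1 \<le> G i j"
  unfolding is_Gog_def is_GT_def tri_idx_def by blast

lemma Gog_interlace_left:
  "is_Gog n G \<Longrightarrow> 1 \<le> j \<Longrightarrow> j \<le> i \<Longrightarrow> i + 1 \<le> n \<Longrightarrow> G (i+1) j \<le> G i j"
  unfolding is_Gog_def is_GT_def by blast

lemma Gog_interlace_right:
  "is_Gog n G \<Longrightarrow> 1 \<le> j \<Longrightarrow> j \<le> i \<Longrightarrow> i + 1 \<le> n \<Longrightarrow> G i j \<le> G (i+1) (j+1)"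
  unfolding is_Gog_def is_GT_def by blast

lemma Gog_row_strict: "is_Gog n G \<Longrightarrow> 1 \<le> j \<Longrightarrow> j < i \<Longrightarrow> i \<le> n \<Longrightarrow> G i j < G i (j+1)"
  unfolding is_Gog_def by blast

lemma Gog_top_row: "is_Gog n G \<Longrightarrow> 1 \<le> j \<Longrightarrow> j \<le> n \<Longrightarrow> G n j = int j"
  unfolding is_Gog_def by blast

lemma Gog_row_gap:
  assumes "is_Gog n G" "1 \<le> a" "a \<le> b" "b \<le> i" "i \<le> n"
  shows "G i a + int (b - a) \<le> G i b"
  using assms(3,4)
proof (induction b rule: dec_induct)
  case (step b)
  then have "G i b < G i (b+1)" using Gog_row_strict[OF assms(1)] assms(2,5) by simp
  with step show ?case by simp
qed simp

lemma Gog_ge_index: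
  assumes "is_Gog n G" "1 \<le> j" "j \<le> i" "i \<le> n"
  shows "int j \<le> G i j"
proof -
  have "1 \<le> G i 1" using Gog_ge_one[OF assms(1)] assms by simp
  moreover have "G i 1 + int (j - 1) \<le> G i j" using Gog_row_gap[OF assms(1), of 1 j i] assms by simp
  ultimately show ?thesis using assms(2) by simp
qed

lemma Gog_NE_diag_mono:
  assumes "is_Gog n G" "1 \<le> a" "a + l \<le> i" "i \<le> n"
  shows "G (i - l) a \<le> G i (a + l)"
  using assms(3,4)
proof (induction l arbitrary: i)
  case (Suc l)
  have "G (i - 1 - l) a \<le> G (i - 1) (a + l)" using Suc.IH[of "i - 1"] Suc.prems by simp
  also have "\<dots> \<le> G (i - 1 + 1) (a + l + 1)"
    using Gog_interlace_right[OF assms(1), of "a + l" "i - 1"] assms(2) Suc.prems by simp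
  also have "i - 1 + 1 = i" using Suc.prems by simp
  finally show ?case by simp
qed simp

lemma Gog_path_bound:
  assumes "is_Gog n G" "1 \<le> k" "k \<le> j" "l \<le> j - k" "j \<le> i" "i \<le> n"
  shows "G (i - l) k + int (j - k - l) \<le> G i j"
proof -
  have "G (i - l) k + int (j - l - k) \<le> G (i - l) (j - l)"
    using Gog_row_gap[OF assms(1), of k "j-l" "i-l"] assms by simp
  also have "\<dots> \<le> G i (j - l + l)"
    using Gog_NE_diag_mono[OF assms(1), of "j-l" l i] assms by simp
  finally show ?thesis using assms(3,4) by (simp add: algebra_simps)
qed

definition right_min :: "nat \<Rightarrow> (nat \<Rightarrow> nat \<Rightarrow> int) \<Rightarrow> nat \<Rightarrow> nat \<Rightarrow> int" where
  "right_min k G i j = (if j + k \<le> i then int j else G i j)"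

lemma agree_on_right_min: "1 \<le> k \<Longrightarrow> agree_on (right_idx n k) (right_min k G) G"
  unfolding agree_on_def right_idx_def tri_idx_def right_min_def by auto

lemma is_Gog_right_min:
  assumes G: "is_Gog n G"
  shows "is_Gog n (right_min k G)"
  unfolding is_Gog_def is_GT_def
proof (intro conjI allI impI)
  fix i j assume "tri_idx n i j"
  then show "1 \<le> right_min k G i j"
    using Gog_ge_one[OF G] unfolding tri_idx_def right_min_def by auto
next
  fix i j assume "1 \<le> j \<and> j \<le> i \<and> i + 1 \<le> n"
  then show "right_min k G (i+1) j \<le> right_min k G i j"
    and "right_min k G i j \<le> right_min k G (i+1) (j+1)"
    using Gog_interlace_left[OF G, of j i] Gog_interlace_right[OF G, of j i]
      Gog_ge_index[OF G, of j i] unfolding right_min_def by auto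
next
  fix i j assume "1 \<le> j \<and> j < i \<and> i \<le> n"
  then show "right_min k G i j < right_min k G i (j+1)"
    using Gog_row_strict[OF G, of j i] Gog_ge_index[OF G, of "j+1" i]
    unfolding right_min_def by auto
next
  fix j assume "1 \<le> j \<and> j \<le> n"
  then show "right_min k G n j = int j" using Gog_top_row[OF G, of j] unfolding right_min_def by auto
qed

lemma right_min_le:
  assumes G': "is_Gog n G'" and agree: "agree_on (right_idx n k) G' G"
  shows "tri_le n (right_min k G) G'"
  unfolding tri_le_def
proof (intro allI impI)
  fix i j assume ij: "tri_idx n i j"
  show "right_min k G i j \<le> G' i j"
  proof (cases "j + k \<le> i")
    case True
    with Gog_ge_index[OF G'] ij show ?thesis unfolding right_min_def tri_idx_def by simp
  next
    case False
    then have "right_idx n k i j" using ij unfolding right_idx_def tri_idx_def by auto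
    with agree False show ?thesis unfolding agree_on_def right_min_def by simp
  qed
qed

definition diag_max :: "(nat \<Rightarrow> int) \<Rightarrow> nat \<Rightarrow> nat \<Rightarrow> int" where
  "diag_max c i d = Max ((\<lambda>l. c (i - l) + int (d - l)) ` {0..d})"

lemma diag_max_ge: "l \<le> d \<Longrightarrow> c (i - l) + int (d - l) \<le> diag_max c i d"
  unfolding diag_max_def by (intro Max_ge) auto

lemma diag_max_attained: "\<exists>l \<le> d. diag_max c i d = c (i - l) + int (d - l)"
proof -
  have "diag_max c i d \<in> (\<lambda>l. c (i - l) + int (d - l)) ` {0..d}"
    unfolding diag_max_def by (intro Max_in) auto
  then show ?thesis by auto
qed

lemma diag_max_0 [simp]: "diag_max c i 0 = c i"
  unfolding diag_max_def by simp

lemma diag_max_less_Suc: "diag_max c i d < diag_max c i (Suc d)"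
proof -
  obtain l where "l \<le> d" "diag_max c i d = c (i - l) + int (d - l)"
    using diag_max_attained by blast
  with diag_max_ge[of l "Suc d" c i] show ?thesis by (simp add: Suc_diff_le)
qed

lemma diag_max_le_Suc_Suc: "diag_max c i d \<le> diag_max c (Suc i) (Suc d)"
proof -
  obtain l where "l \<le> d" "diag_max c i d = c (i - l) + int (d - l)"
    using diag_max_attained by blast
  with diag_max_ge[of "Suc l" "Suc d" c "Suc i"] show ?thesis by simp
qed

lemma diag_max_Suc_le:
  assumes "c (Suc i) \<le> c i"
  shows "diag_max c (Suc i) d \<le> diag_max c i d"
proof -
  obtain l where l: "l \<le> d" "diag_max c (Suc i) d = c (Suc i - l) + int (d - l)"
    using diag_max_attained by blast
  show ?thesis
  proof (cases l)
    case 0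
    with l assms diag_max_ge[of 0 d c i] show ?thesis by simp
  next
    case (Suc m)
    with l diag_max_ge[of m d c i] show ?thesis by simp
  qed
qed

definition left_min :: "nat \<Rightarrow> (nat \<Rightarrow> nat \<Rightarrow> int) \<Rightarrow> nat \<Rightarrow> nat \<Rightarrow> int" where
  "left_min k G i j = (if j \<le> k then G i j else diag_max (\<lambda>i. G i k) i (j - k))"

lemma agree_on_left_min: "agree_on (left_idx n k) (left_min k G) G"
  unfolding agree_on_def left_idx_def left_min_def by auto

lemma left_min_eq_diag_max: "k \<le> j \<Longrightarrow> left_min k G i j = diag_max (\<lambda>i. left_min k G i k) i (j - k)"
  unfolding left_min_def by auto

lemma left_min_top_row:
  assumes G: "is_Gog n G" and k: "1 \<le> k" "k \<le> n" and j: "1 \<le> j" "j \<le> n"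
  shows "left_min k G n j = int j"
proof (cases "j \<le> k")
  case False
  have "G (n - l) k + int (j - k - l) \<le> int j" if "l \<le> j - k" for l
  proof -
    have "k + l \<le> n" using that j k by auto
    then have "G (n - l) k \<le> int (k + l)"
      using Gog_NE_diag_mono[OF G k(1), of l n] Gog_top_row[OF G, of "k+l"] k by simp
    then show ?thesis using that False by simp
  qed
  moreover obtain l where "l \<le> j - k" "diag_max (\<lambda>i. G i k) n (j - k) = G (n - l) k + int (j - k - l)"
    using diag_max_attained by blast
  ultimately have "diag_max (\<lambda>i. G i k) n (j - k) \<le> int j" by simp
  moreover have "int j \<le> diag_max (\<lambda>i. G i k) n (j - k)"
    using diag_max_ge[of 0 "j-k" "\<lambda>i. G i k" n] Gog_top_row[OF G, of k] k False by simp
  ultimately show ?thesis using False unfolding left_min_def by simp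
qed (use Gog_top_row[OF G, of j] j in \<open>simp add: left_min_def\<close>)

lemma is_Gog_left_min:
  assumes G: "is_Gog n G" and k: "1 \<le> k" "k \<le> n"
  shows "is_Gog n (left_min k G)"
  unfolding is_Gog_def is_GT_def
proof (intro conjI allI impI)
  fix i j assume "tri_idx n i j"
  then show "1 \<le> left_min k G i j"
    using Gog_ge_one[OF G] Gog_ge_one[OF G, of k i] diag_max_ge[of 0 "j-k" "\<lambda>i. G i k" i] k
    unfolding tri_idx_def left_min_def by fastforce
next
  fix i j assume ij: "1 \<le> j \<and> j \<le> i \<and> i + 1 \<le> n"
  have col: "G (Suc i) k \<le> G i k" if "k \<le> j" using Gog_interlace_left[OF G, of k i] ij k that by simp
  show "left_min k G (i+1) j \<le> left_min k G i j"
    using Gog_interlace_left[OF G, of j i] ij diag_max_Suc_le[OF col]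
    unfolding left_min_def by auto
  show "left_min k G i j \<le> left_min k G (i+1) (j+1)"
  proof (cases "k \<le> j")
    case True
    then show ?thesis
      using diag_max_le_Suc_Suc[of "\<lambda>i. G i k" i "j-k"] by (auto simp: left_min_def Suc_diff_le)
  qed (use Gog_interlace_right[OF G, of j i] ij in \<open>simp add: left_min_def\<close>)
next
  fix i j assume ij: "1 \<le> j \<and> j < i \<and> i \<le> n"
  show "left_min k G i j < left_min k G i (j+1)"
  proof (cases "k \<le> j")
    case True
    then show ?thesis
      using diag_max_less_Suc[of "\<lambda>i. G i k" i "j-k"] by (auto simp: left_min_def Suc_diff_le)
  qed (use Gog_row_strict[OF G, of j i] ij in \<open>simp add: left_min_def\<close>)
next
  fix j assume "1 \<le> j \<and> j \<le> n"
  then show "left_min k G n j = int j" using left_min_top_row[OF G k] by simp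
qed

lemma left_min_le:
  assumes G': "is_Gog n G'" and agree: "agree_on (left_idx n k) G' G" and k: "1 \<le> k"
  shows "tri_le n (left_min k G) G'"
  unfolding tri_le_def
proof (intro allI impI)
  fix i j assume ij: "tri_idx n i j"
  show "left_min k G i j \<le> G' i j"
  proof (cases "j \<le> k")
    case False
    obtain l where l: "l \<le> j - k" "diag_max (\<lambda>i. G i k) i (j - k) = G (i - l) k + int (j - k - l)"
      using diag_max_attained by blast
    have "k \<le> i - l" using l ij False unfolding tri_idx_def by auto
    then have "left_idx n k (i - l) k" using ij k unfolding left_idx_def tri_idx_def by auto
    then have "G' (i - l) k = G (i - l) k" using agree unfolding agree_on_def by simp
    with l False Gog_path_bound[OF G' k, of j l i] ij show ?thesis
      unfolding left_min_def tri_idx_def by auto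
  qed (use agree ij in \<open>auto simp: agree_on_def left_idx_def left_min_def\<close>)
qed

lemma right_Gog_trap_least_completion:
  assumes "1 \<le> k" and "is_right_Gog_trap n k X"
  shows "\<exists>M. is_Gog n M \<and> agree_on (right_idx n k) M X \<and>
           (\<forall>G. is_Gog n G \<and> agree_on (right_idx n k) G X \<longrightarrow> tri_le n M G) \<and>
           (\<forall>i j. tri_idx n i j \<and> i \<ge> j + k \<longrightarrow> M i j = int j)"
proof -
  obtain G where G: "is_Gog n G" and GX: "agree_on (right_idx n k) G X"
    using assms(2) unfolding is_right_Gog_trap_def by blast
  let ?M = "right_min k G"
  have agree: "agree_on (right_idx n k) ?M X"
    using agree_on_trans[OF agree_on_right_min[OF assms(1)] GX] .
  have least: "\<forall>G'. is_Gog n G' \<and> agree_on (right_idx n k) G' X \<longrightarrow> tri_le n ?M G'"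
    using right_min_le agree_on_trans[OF _ agree_on_sym[OF GX]] by blast
  have "\<forall>i j. tri_idx n i j \<and> i \<ge> j + k \<longrightarrow> ?M i j = int j"
    by (simp add: right_min_def)
  with is_Gog_right_min[OF G] agree least show ?thesis
    by (intro exI[of _ ?M] conjI)
qed

lemma left_Gog_trap_least_completion:
  assumes "1 \<le> k" "k \<le> n" and "is_left_Gog_trap n k X"
  shows "\<exists>M. is_Gog n M \<and> agree_on (left_idx n k) M X \<and>
           (\<forall>G. is_Gog n G \<and> agree_on (left_idx n k) G X \<longrightarrow> tri_le n M G) \<and>
           (\<forall>i j. tri_idx n i j \<and> j \<ge> k \<longrightarrow>
              M i j = Max ((\<lambda>l. M (i - l) k + int (j - k - l)) ` {0..j - k}))"
proof -
  obtain G where G: "is_Gog n G" and GX: "agree_on (left_idx n k) G X"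
    using assms(3) unfolding is_left_Gog_trap_def by blast
  let ?M = "left_min k G"
  have agree: "agree_on (left_idx n k) ?M X"
    using agree_on_trans[OF agree_on_left_min GX] .
  have least: "\<forall>G'. is_Gog n G' \<and> agree_on (left_idx n k) G' X \<longrightarrow> tri_le n ?M G'"
    using left_min_le[OF _ _ assms(1)] agree_on_trans[OF _ agree_on_sym[OF GX]] by blast
  have "\<forall>i j. tri_idx n i j \<and> j \<ge> k \<longrightarrow>
          ?M i j = Max ((\<lambda>l. ?M (i - l) k + int (j - k - l)) ` {0..j - k})"
    using left_min_eq_diag_max unfolding diag_max_def by blast
  with is_Gog_left_min[OF G assms(1,2)] agree least show ?thesis
    by (intro exI[of _ ?M] conjI)
qed

theorem mainTheorem6:
  fixes n k :: nat
  assumes "1 \<le> k" and "k \<le> n"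
  shows
   "(\<forall>X. is_right_Gog_trap n k X \<longrightarrow>
       (\<exists>M. is_Gog n M \<and> agree_on (right_idx n k) M X \<and>
          (\<forall>G. is_Gog n G \<and> agree_on (right_idx n k) G X \<longrightarrow> tri_le n M G) \<and>
          (\<forall>i j. tri_idx n i j \<and> i \<ge> j + k \<longrightarrow> M i j = int j)))
    \<and>
    (\<forall>X. is_left_Gog_trap n k X \<longrightarrow>
       (\<exists>M. is_Gog n M \<and> agree_on (left_idx n k) M X \<and>
          (\<forall>G. is_Gog n G \<and> agree_on (left_idx n k) G X \<longrightarrow> tri_le n M G) \<and>
          (\<forall>i j. tri_idx n i j \<and> j \<ge> k \<longrightarrow>
             M i j = Max ((\<lambda>l. M (i - l) k + int (j - k - l)) ` {0..j - k}))))"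
  using right_Gog_trap_least_completion[OF assms(1)] left_Gog_trap_least_completion[OF assms]
  by blast

end
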